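(* Let $V$ be a complex vector space with inner products $\langle\cdot,\cdot\rangle_1,\langle\cdot,\cdot\rangle_2$ and induced norms $\|\cdot\|_1,\|\cdot\|_2$. Suppose at least one of the following holds: (1) $\langle\cdot,\cdot\rangle_2=c\langle\cdot,\cdot\rangle_1$ for some $c>0$; (2) $\|\cdot\|_2=c\|\cdot\|_1$ for some $c>0$; (3) the two inner products give the same angle between every pair of nonzero vectors; (4) for all nonzero $x,y$, $\mathrm{Re}\langle x,y\rangle_1=0\iff\mathrm{Re}\langle x,y\rangle_2=0$; (5) for all $x,y$, $\langle x,y\rangle_1=0\iff\langle x,y\rangle_2=0$; (6) for some $\theta_0\in(0,\pi)$, for all nonzero $x,y$ the angle between $x,y$ with respect to $\langle\cdot,\cdot\rangle_1$ is $\theta_0$ iff it is $\theta_0$ with respect to $\langle\cdot,\cdot\rangle_2$. If moreover there is a nonzero $x\in V$ with $\|x\|_1=\|x\|_2$, then $\langle\cdot,\cdot\rangle_1=\langle\cdot,\cdot\rangle_2$.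
   Context: Inner products are linear in the first argument and conjugate-linear in the second, with norm $\|x\|=\sqrt{\langle x,x\rangle}$. The angle between nonzero vectors $x,y$ of a complex inner product space is the unique $\theta\in[0,\pi]$ with $\cos\theta=\mathrm{Re}\,\langle x,y\rangle/(\|x\|\|y\|)$. *)

theory Defs
  imports Complex_Main
begin

text \<open>A complex vector space is modelled as a type 'a of class ab_group_add together
with a scalar multiplication sc :: complex => 'a => 'a satisfying the locale vector_space.\<close>
definition is_cinner :: "(complex \<Rightarrow> 'a::ab_group_add \<Rightarrow> 'a) \<Rightarrow> ('a \<Rightarrow> 'a \<Rightarrow> complex) \<Rightarrow> bool" where
  "is_cinner sc ip \<longleftrightarrow>
     (\<forall>x y z. ip (x + y) z = ip x z + ip y z) \<and>
     (\<forall>c x y. ip (sc c x) y = c * ip x y) \<and>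
     (\<forall>x y. ip y x = cnj (ip x y)) \<and>
     (\<forall>x. x \<noteq> 0 \<longrightarrow> 0 < Re (ip x x))"

definition ip_norm :: "('a \<Rightarrow> 'a \<Rightarrow> complex) \<Rightarrow> 'a \<Rightarrow> real" where
  "ip_norm ip x = sqrt (Re (ip x x))"

definition ip_angle :: "('a \<Rightarrow> 'a \<Rightarrow> complex) \<Rightarrow> 'a \<Rightarrow> 'a \<Rightarrow> real" where
  "ip_angle ip x y = arccos (Re (ip x y) / (ip_norm ip x * ip_norm ip y))"

end

theory Submission
  imports Defs
begin

text \<open>Conditions (1) and (2) say directly that \<open>\<parallel>\<cdot>\<parallel>\<^sub>2 / \<parallel>\<cdot>\<parallel>\<^sub>1\<close> is constant; the
others lead to the same conclusion. (3) is the case \<open>\<theta>\<^sub>0 = pi/2\<close> of (6). Under (6),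
\<open>Re \<langle>x, z\<rangle>\<^sub>1 = 0\<close> forces \<open>Re \<langle>x, z\<rangle>\<^sub>2 = 0\<close>: for unit vectors \<open>x, z\<close> the two unit vectors
\<open>cos \<theta>\<^sub>0 \<cdot> x \<plusminus> sin \<theta>\<^sub>0 \<cdot> z\<close> make angle \<open>\<theta>\<^sub>0\<close> with \<open>x\<close>, and the two resulting
cosine equations for the second inner product differ by a multiple of \<open>Re \<langle>x, z\<rangle>\<^sub>2\<close>.
This preservation of real orthogonality, like (5), implies that \<open>\<parallel>u\<parallel>\<^sub>1 = \<parallel>v\<parallel>\<^sub>1\<close> with
\<open>\<langle>u, v\<rangle>\<^sub>1\<close> real gives \<open>\<parallel>u\<parallel>\<^sub>2 = \<parallel>v\<parallel>\<^sub>2\<close>, since then \<open>u + v\<close> and \<open>u - v\<close> are orthogonal.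
Every nonzero vector has a complex multiple standing in this relation to a fixed \<open>x\<^sub>0\<close>, so the
ratio of the norms is constant. Equality at \<open>x\<^sub>0\<close> makes it 1, and polarization recovers the
inner products from the norms.\<close>

locale cinner_space =
  fixes sc :: "complex \<Rightarrow> 'a::ab_group_add \<Rightarrow> 'a" and ip :: "'a \<Rightarrow> 'a \<Rightarrow> complex"
  assumes is_cinner: "is_cinner sc ip"
begin

lemma add_left: "ip (x + y) z = ip x z + ip y z"
  using is_cinner unfolding is_cinner_def by blast

lemma scale_left: "ip (sc c x) y = c * ip x y"
  using is_cinner unfolding is_cinner_def by blast

lemma commute: "ip y x = cnj (ip x y)"
  using is_cinner unfolding is_cinner_def by blast

lemma Re_self_gt_zero: "x \<noteq> 0 \<Longrightarrow> 0 < Re (ip x x)"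
  using is_cinner unfolding is_cinner_def by blast

lemma add_right: "ip x (y + z) = ip x y + ip x z"
  by (metis add_left complex_cnj_add commute)

lemma scale_right: "ip x (sc c y) = cnj c * ip x y"
  by (metis scale_left complex_cnj_mult commute)

lemma zero_left [simp]: "ip 0 y = 0"
  using add_left[of 0 0 y] by simp

lemma zero_right [simp]: "ip y 0 = 0"
  using add_right[of y 0 0] by simp

lemma diff_right: "ip x (y - z) = ip x y - ip x z"
  using add_right[of x "y - z" z] by simp

lemma Re_commute: "Re (ip y x) = Re (ip x y)"
  using commute[of y x] by simp

lemma self_eq_Re: "ip x x = complex_of_real (Re (ip x x))"
proof -
  have "Im (ip x x) = 0"
    using commute[of x x] by (metis Reals_cnj_iff complex_is_Real_iff)
  then show ?thesis by (simp add: complex_eq_iff)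
qed

lemma Re_self_ge_zero: "0 \<le> Re (ip x x)"
  using Re_self_gt_zero[of x] by (cases "x = 0") auto

lemma Re_self_eq_zero_iff [simp]: "Re (ip x x) = 0 \<longleftrightarrow> x = 0"
  using Re_self_gt_zero[of x] by (cases "x = 0") auto

lemma ip_norm_square: "(ip_norm ip x)\<^sup>2 = Re (ip x x)"
  unfolding ip_norm_def using Re_self_ge_zero by simp

lemma ip_norm_pos: "x \<noteq> 0 \<Longrightarrow> 0 < ip_norm ip x"
  unfolding ip_norm_def using Re_self_gt_zero by simp

lemma Re_self_scale: "Re (ip (sc c x) (sc c x)) = (cmod c)\<^sup>2 * Re (ip x x)"
proof -
  have "ip (sc c x) (sc c x) = (c * cnj c) * ip x x"
    by (simp add: scale_left scale_right mult.assoc)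
  also have "c * cnj c = complex_of_real ((cmod c)\<^sup>2)"
    using complex_norm_square[of c] by simp
  finally show ?thesis by simp
qed

lemma Re_self_normalize:
  assumes "x \<noteq> 0"
  shows "Re (ip (sc (of_real (1 / ip_norm ip x)) x) (sc (of_real (1 / ip_norm ip x)) x)) = 1"
  unfolding Re_self_scale norm_of_real power2_abs
  using ip_norm_pos[OF assms] by (simp add: power_divide flip: ip_norm_square)

lemma Re_scale_real: "Re (ip (sc (of_real a) x) (sc (of_real b) z)) = a * b * Re (ip x z)"
  by (simp add: scale_left scale_right)

lemma Re_self_add: "Re (ip (x + y) (x + y)) = Re (ip x x) + 2 * Re (ip x y) + Re (ip y y)"
  using Re_commute[of x y] by (simp add: add_left add_right)

lemma Re_lincomb_right:
  "Re (ip x (sc (of_real a) x + sc (of_real b) z)) = a * Re (ip x x) + b * Re (ip x z)"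
  by (simp add: add_right scale_right)

lemma Re_self_lincomb:
  "Re (ip (sc (of_real a) x + sc (of_real b) z) (sc (of_real a) x + sc (of_real b) z))
     = a\<^sup>2 * Re (ip x x) + 2 * a * b * Re (ip x z) + b\<^sup>2 * Re (ip z z)"
  using Re_commute[of x z]
  by (simp add: add_left add_right scale_left scale_right power2_eq_square algebra_simps)

lemma sum_diff: "ip (u + v) (u - v) = ip u u - ip v v + (cnj (ip u v) - ip u v)"
  by (simp add: add_left diff_right commute[of v u])

lemma Re_Cauchy_Schwarz: "\<bar>Re (ip x y)\<bar> \<le> ip_norm ip x * ip_norm ip y"
proof (cases "y = 0")
  case True
  then show ?thesis by (simp add: ip_norm_def)
next
  case False
  define t where "t = Re (ip x y) / Re (ip y y)"
  have qy: "0 < Re (ip y y)" using Re_self_gt_zero False by blast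
  have "0 \<le> Re (ip (sc (of_real 1) x + sc (of_real (- t)) y) (sc (of_real 1) x + sc (of_real (- t)) y))"
    by (rule Re_self_ge_zero)
  also have "\<dots> = Re (ip x x) - 2 * t * Re (ip x y) + t\<^sup>2 * Re (ip y y)"
    by (simp only: Re_self_lincomb) simp
  also have "\<dots> = Re (ip x x) - (Re (ip x y))\<^sup>2 / Re (ip y y)"
    using qy by (simp add: t_def field_simps power2_eq_square)
  finally have "(Re (ip x y))\<^sup>2 \<le> (ip_norm ip x * ip_norm ip y)\<^sup>2"
    using qy by (simp add: ip_norm_square field_simps)
  moreover have "0 \<le> ip_norm ip x * ip_norm ip y"
    by (simp add: ip_norm_def Re_self_ge_zero)
  ultimately show ?thesis
    by (metis power2_abs power2_le_imp_le)
qed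

lemma ip_angle_eq_iff:
  assumes "x \<noteq> 0" "y \<noteq> 0" "0 \<le> \<theta>" "\<theta> \<le> pi"
  shows "ip_angle ip x y = \<theta> \<longleftrightarrow> Re (ip x y) = cos \<theta> * (ip_norm ip x * ip_norm ip y)"
proof -
  define r where "r = Re (ip x y) / (ip_norm ip x * ip_norm ip y)"
  have nxy: "0 < ip_norm ip x * ip_norm ip y"
    using ip_norm_pos assms(1,2) by simp
  then have "\<bar>r\<bar> \<le> 1"
    using Re_Cauchy_Schwarz[of x y] by (simp add: r_def divide_le_eq_1)
  then have "arccos r = \<theta> \<longleftrightarrow> r = cos \<theta>"
    using assms(3,4) arccos_cos cos_arccos_abs by metis
  with nxy show ?thesis
    unfolding ip_angle_def r_def[symmetric] by (auto simp: r_def divide_eq_eq)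
qed

lemma exists_scale_real_ip:
  assumes "v \<noteq> 0" "0 \<le> r"
  obtains c where "(cmod c)\<^sup>2 * Re (ip v v) = r" "Im (ip u (sc c v)) = 0"
proof -
  define w where "w = ip u v"
  define t where "t = sqrt (r / Re (ip v v))"
  define c where "c = of_real t * (if w = 0 then 1 else sgn w)"
  have qv: "0 < Re (ip v v)" using Re_self_gt_zero assms(1) by blast
  show ?thesis
  proof (rule that)
    show "(cmod c)\<^sup>2 * Re (ip v v) = r"
      using qv assms by (simp add: c_def t_def norm_mult power_mult_distrib norm_sgn)
    show "Im (ip u (sc c v)) = 0"
      by (simp add: c_def scale_right w_def[symmetric] sgn_div_norm)
  qed
qed

end

text \<open>The two equations are the squared cosine conditions of \<open>x\<close> against
\<open>k x \<plusminus> s z\<close> in the second inner product, with \<open>a = \<parallel>x\<parallel>\<^sup>2\<close>, \<open>b = \<parallel>z\<parallel>\<^sup>2\<close>,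
\<open>m = Re \<langle>x, z\<rangle>\<close>; their difference is \<open>4 k a s m \<cdot> s\<^sup>2 = 0\<close>.\<close>
lemma cos_conditions_imp_zero:
  fixes k s a b m :: real
  assumes "0 < s" "k\<^sup>2 + s\<^sup>2 = 1" "0 < a"
    and plus: "(k * a + s * m)\<^sup>2 = k\<^sup>2 * a * (k\<^sup>2 * a + 2 * k * s * m + s\<^sup>2 * b)"
    and minus: "(k * a - s * m)\<^sup>2 = k\<^sup>2 * a * (k\<^sup>2 * a - 2 * k * s * m + s\<^sup>2 * b)"
  shows "m = 0"
proof (cases "k = 0")
  case True
  then show ?thesis using plus \<open>0 < s\<close> by simp
next
  case False
  have "4 * k * a * s * m = (k * a + s * m)\<^sup>2 - (k * a - s * m)\<^sup>2"
    by (simp add: power2_eq_square algebra_simps)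
  also have "\<dots> = k\<^sup>2 * (4 * k * a * s * m)"
    unfolding plus minus by (simp add: algebra_simps)
  finally have "4 * k * a * s * m * (1 - k\<^sup>2) = 0"
    by (simp add: algebra_simps)
  moreover have "1 - k\<^sup>2 = s\<^sup>2"
    using assms(2) by simp
  ultimately have "4 * k * a * s * m * s\<^sup>2 = 0"
    by simp
  with False assms(1,3) show ?thesis by simp
qed

locale cinner_pair = I1: cinner_space sc ip1 + I2: cinner_space sc ip2
  for sc :: "complex \<Rightarrow> 'a::ab_group_add \<Rightarrow> 'a" and ip1 ip2 :: "'a \<Rightarrow> 'a \<Rightarrow> complex"
begin

lemma eq_if_Re_self_eq:
  assumes q: "\<And>v. Re (ip1 v v) = Re (ip2 v v)"
  shows "ip1 = ip2"
proof (intro ext)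
  fix x y
  have Re_eq: "Re (ip1 x y) = Re (ip2 x y)" for x y
    using I1.Re_self_add[of x y] I2.Re_self_add[of x y] q[of "x + y"] q[of x] q[of y] by simp
  have "Im (ip1 x y) = Im (ip2 x y)"
    using Re_eq[of x "sc \<i> y"] by (simp add: I1.scale_right I2.scale_right)
  with Re_eq[of x y] show "ip1 x y = ip2 x y" by (simp add: complex_eq_iff)
qed

lemma eq_if_ip_norm_proportional:
  assumes "x\<^sub>0 \<noteq> 0" "ip_norm ip1 x\<^sub>0 = ip_norm ip2 x\<^sub>0"
    and proportional: "\<And>x. ip_norm ip2 x = c * ip_norm ip1 x"
  shows "ip1 = ip2"
proof -
  have "c = 1"
    using proportional[of x\<^sub>0] assms(2) I1.ip_norm_pos[OF assms(1)] by simp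
  then show ?thesis
    using proportional I1.ip_norm_square I2.ip_norm_square by (metis eq_if_Re_self_eq mult_1)
qed

lemma eq_if_preserves_equal_norms:
  assumes x0: "x\<^sub>0 \<noteq> 0" "ip_norm ip1 x\<^sub>0 = ip_norm ip2 x\<^sub>0"
    and preserves: "\<And>u v. Re (ip1 u u) = Re (ip1 v v) \<Longrightarrow> Im (ip1 u v) = 0
                      \<Longrightarrow> Re (ip2 u u) = Re (ip2 v v)"
  shows "ip1 = ip2"
proof (rule eq_if_Re_self_eq)
  fix v
  have q0: "Re (ip1 x\<^sub>0 x\<^sub>0) = Re (ip2 x\<^sub>0 x\<^sub>0)"
    using x0(2) by (metis I1.ip_norm_square I2.ip_norm_square)
  show "Re (ip1 v v) = Re (ip2 v v)"
  proof (cases "v = 0")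
    case False
    obtain c where c: "(cmod c)\<^sup>2 * Re (ip1 v v) = Re (ip1 x\<^sub>0 x\<^sub>0)" "Im (ip1 x\<^sub>0 (sc c v)) = 0"
      using I1.exists_scale_real_ip[OF False I1.Re_self_ge_zero] .
    have "Re (ip2 x\<^sub>0 x\<^sub>0) = Re (ip2 (sc c v) (sc c v))"
      using preserves c by (simp add: I1.Re_self_scale)
    then have "(cmod c)\<^sup>2 * Re (ip1 v v) = (cmod c)\<^sup>2 * Re (ip2 v v)"
      using c(1) q0 by (simp add: I2.Re_self_scale)
    moreover have "c \<noteq> 0"
      using c(1) x0(1) by auto
    ultimately show ?thesis by simp
  qed simp
qed

lemma preserves_equal_norms_if_preserves_orth:
  assumes orth: "\<And>x z. ip1 x z = 0 \<Longrightarrow> ip2 x z = 0"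
    and "Re (ip1 u u) = Re (ip1 v v)" "Im (ip1 u v) = 0"
  shows "Re (ip2 u u) = Re (ip2 v v)"
proof -
  have "ip1 (u + v) (u - v) = 0"
    using assms(2,3) I1.self_eq_Re[of u] I1.self_eq_Re[of v]
    by (simp add: I1.sum_diff complex_eq_iff)
  then have "Re (ip2 (u + v) (u - v)) = 0" using orth by simp
  then show ?thesis by (simp add: I2.sum_diff)
qed

lemma preserves_equal_norms_if_preserves_Re_orth:
  assumes orth: "\<And>x z. x \<noteq> 0 \<Longrightarrow> z \<noteq> 0 \<Longrightarrow> Re (ip1 x z) = 0 \<Longrightarrow> Re (ip2 x z) = 0"
    and "Re (ip1 u u) = Re (ip1 v v)"
  shows "Re (ip2 u u) = Re (ip2 v v)"
proof -
  have "Re (ip1 (u + v) (u - v)) = 0" using assms(2) by (simp add: I1.sum_diff)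
  then have "Re (ip2 (u + v) (u - v)) = 0"
    using orth by (cases "u + v = 0 \<or> u - v = 0") auto
  then show ?thesis by (simp add: I2.sum_diff)
qed

lemma eq_if_preserves_Re_orth:
  assumes "x\<^sub>0 \<noteq> 0" "ip_norm ip1 x\<^sub>0 = ip_norm ip2 x\<^sub>0"
    and "\<And>x z. x \<noteq> 0 \<Longrightarrow> z \<noteq> 0 \<Longrightarrow> Re (ip1 x z) = 0 \<Longrightarrow> Re (ip2 x z) = 0"
  shows "ip1 = ip2"
  using eq_if_preserves_equal_norms[OF assms(1,2)] preserves_equal_norms_if_preserves_Re_orth[OF assms(3)]
  by blast

lemma preserves_Re_orth_if_preserves_angle_unit:
  assumes \<theta>: "0 < \<theta>" "\<theta> < pi"
    and angle: "\<And>x y. x \<noteq> 0 \<Longrightarrow> y \<noteq> 0 \<Longrightarrow> ip_angle ip1 x y = \<theta> \<longleftrightarrow> ip_angle ip2 x y = \<theta>"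
    and unit: "Re (ip1 x x) = 1" "Re (ip1 z z) = 1" and orth: "Re (ip1 x z) = 0"
  shows "Re (ip2 x z) = 0"
proof -
  define k where "k = cos \<theta>"
  define s where "s = sin \<theta>"
  have s: "0 < s" unfolding s_def using \<theta> sin_gt_zero by blast
  have ks: "k\<^sup>2 + s\<^sup>2 = 1" unfolding k_def s_def by simp
  have x0: "x \<noteq> 0" using unit(1) by auto
  define a where "a = Re (ip2 x x)"
  define b where "b = Re (ip2 z z)"
  define m where "m = Re (ip2 x z)"
  have cos_condition: "(k * a + d * m)\<^sup>2 = k\<^sup>2 * a * (k\<^sup>2 * a + 2 * k * d * m + d\<^sup>2 * b)"
    if d: "k\<^sup>2 + d\<^sup>2 = 1" for d
  proof -
    define y where "y = sc (of_real k) x + sc (of_real d) z"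
    have qy: "Re (ip1 y y) = 1" unfolding y_def I1.Re_self_lincomb using unit orth d by simp
    then have y0: "y \<noteq> 0" by auto
    have "Re (ip1 x y) = k" unfolding y_def I1.Re_lincomb_right using unit orth by simp
    then have "ip_angle ip1 x y = \<theta>"
      using I1.ip_angle_eq_iff[OF x0 y0] \<theta> unit(1) qy by (simp add: k_def ip_norm_def)
    then have "Re (ip2 x y) = k * (ip_norm ip2 x * ip_norm ip2 y)"
      using angle[OF x0 y0] I2.ip_angle_eq_iff[OF x0 y0] \<theta> by (simp add: k_def)
    then have "(Re (ip2 x y))\<^sup>2 = k\<^sup>2 * a * Re (ip2 y y)"
      by (simp add: power_mult_distrib I2.ip_norm_square a_def)
    then show ?thesis
      unfolding y_def I2.Re_lincomb_right I2.Re_self_lincomb a_def b_def m_def .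
  qed
  show ?thesis
    unfolding m_def[symmetric]
  proof (rule cos_conditions_imp_zero[OF s ks _ cos_condition[OF ks]])
    show "0 < a" using I2.Re_self_gt_zero x0 a_def by blast
    show "(k * a - s * m)\<^sup>2 = k\<^sup>2 * a * (k\<^sup>2 * a - 2 * k * s * m + s\<^sup>2 * b)"
      using cos_condition[of "- s"] ks by simp
  qed
qed

lemma preserves_Re_orth_if_preserves_angle:
  assumes \<theta>: "0 < \<theta>" "\<theta> < pi"
    and angle: "\<And>x y. x \<noteq> 0 \<Longrightarrow> y \<noteq> 0 \<Longrightarrow> ip_angle ip1 x y = \<theta> \<longleftrightarrow> ip_angle ip2 x y = \<theta>"
    and "x \<noteq> 0" "z \<noteq> 0" and orth: "Re (ip1 x z) = 0"
  shows "Re (ip2 x z) = 0"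
proof -
  define \<alpha> where "\<alpha> = 1 / ip_norm ip1 x"
  define \<beta> where "\<beta> = 1 / ip_norm ip1 z"
  have "Re (ip2 (sc (of_real \<alpha>) x) (sc (of_real \<beta>) z)) = 0"
  proof (rule preserves_Re_orth_if_preserves_angle_unit[OF \<theta> angle])
    show "Re (ip1 (sc (of_real \<alpha>) x) (sc (of_real \<alpha>) x)) = 1"
      unfolding \<alpha>_def by (rule I1.Re_self_normalize) fact
    show "Re (ip1 (sc (of_real \<beta>) z) (sc (of_real \<beta>) z)) = 1"
      unfolding \<beta>_def by (rule I1.Re_self_normalize) fact
    show "Re (ip1 (sc (of_real \<alpha>) x) (sc (of_real \<beta>) z)) = 0"
      using orth by (simp only: I1.Re_scale_real mult_zero_right)
  qed
  moreover have "0 < ip_norm ip1 x" "0 < ip_norm ip1 z"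
    using I1.ip_norm_pos assms(4,5) by auto
  ultimately show ?thesis
    by (simp only: I2.Re_scale_real) (simp add: \<alpha>_def \<beta>_def)
qed

end

theorem mainTheorem11:
  fixes sc :: "complex \<Rightarrow> 'a::ab_group_add \<Rightarrow> 'a"
    and ip1 ip2 :: "'a \<Rightarrow> 'a \<Rightarrow> complex"
  assumes vs: "vector_space sc"
  assumes ip1: "is_cinner sc ip1" and ip2: "is_cinner sc ip2"
  assumes conds:
    "(\<exists>c::real. c > 0 \<and> (\<forall>x y. ip2 x y = complex_of_real c * ip1 x y))
     \<or> (\<exists>c::real. c > 0 \<and> (\<forall>x. ip_norm ip2 x = c * ip_norm ip1 x))
     \<or> (\<forall>x y. x \<noteq> 0 \<longrightarrow> y \<noteq> 0 \<longrightarrow> ip_angle ip1 x y = ip_angle ip2 x y)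
     \<or> (\<forall>x y. x \<noteq> 0 \<longrightarrow> y \<noteq> 0 \<longrightarrow> (Re (ip1 x y) = 0 \<longleftrightarrow> Re (ip2 x y) = 0))
     \<or> (\<forall>x y. ip1 x y = 0 \<longleftrightarrow> ip2 x y = 0)
     \<or> (\<exists>\<theta>0. 0 < \<theta>0 \<and> \<theta>0 < pi \<and>
          (\<forall>x y. x \<noteq> 0 \<longrightarrow> y \<noteq> 0 \<longrightarrow>
             (ip_angle ip1 x y = \<theta>0 \<longleftrightarrow> ip_angle ip2 x y = \<theta>0)))"
  assumes eqnorm: "\<exists>x. x \<noteq> 0 \<and> ip_norm ip1 x = ip_norm ip2 x"
  shows "ip1 = ip2"
proof -
  interpret cinner_pair sc ip1 ip2
    using ip1 ip2 by (simp add: cinner_pair_def cinner_space_def)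
  obtain x\<^sub>0 where x0: "x\<^sub>0 \<noteq> 0" "ip_norm ip1 x\<^sub>0 = ip_norm ip2 x\<^sub>0"
    using eqnorm by blast
  from conds show ?thesis
  proof (elim disjE exE conjE)
    fix c :: real assume "0 < c" "\<forall>x y. ip2 x y = of_real c * ip1 x y"
    then have "ip_norm ip2 x = sqrt c * ip_norm ip1 x" for x
      by (simp add: ip_norm_def real_sqrt_mult)
    then show ?thesis by (rule eq_if_ip_norm_proportional[OF x0])
  next
    fix c :: real assume "\<forall>x. ip_norm ip2 x = c * ip_norm ip1 x"
    then show ?thesis by (intro eq_if_ip_norm_proportional[OF x0]) blast
  next
    assume "\<forall>x y. x \<noteq> 0 \<longrightarrow> y \<noteq> 0 \<longrightarrow> ip_angle ip1 x y = ip_angle ip2 x y"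
    then show ?thesis
      by (intro eq_if_preserves_Re_orth[OF x0] preserves_Re_orth_if_preserves_angle[of "pi / 2"])
        simp_all
  next
    assume "\<forall>x y. x \<noteq> 0 \<longrightarrow> y \<noteq> 0 \<longrightarrow> (Re (ip1 x y) = 0 \<longleftrightarrow> Re (ip2 x y) = 0)"
    then show ?thesis by (intro eq_if_preserves_Re_orth[OF x0]) blast
  next
    assume "\<forall>x y. ip1 x y = 0 \<longleftrightarrow> ip2 x y = 0"
    then show ?thesis
      by (intro eq_if_preserves_equal_norms[OF x0] preserves_equal_norms_if_preserves_orth) simp_all
  next
    fix \<theta> assume "0 < \<theta>" "\<theta> < pi"
      "\<forall>x y. x \<noteq> 0 \<longrightarrow> y \<noteq> 0 \<longrightarrow> (ip_angle ip1 x y = \<theta> \<longleftrightarrow> ip_angle ip2 x y = \<theta>)"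
    then show ?thesis
      by (intro eq_if_preserves_Re_orth[OF x0] preserves_Re_orth_if_preserves_angle[of \<theta>]) simp_all
  qed
qed

end
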